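(* Let $T\in\mathcal{T}_{\mathrm{BV}}$, let $I\subseteq\mathbb{T}^1$ be an interval, $n\in\mathbb{N}$, and let $\varphi,\psi:I\to\mathbb{T}^1$ be measurable such that the sets $[\varphi,\psi],T([\varphi,\psi]),\dots,T^{n-1}([\varphi,\psi])$ are pairwise disjoint. Then for every $s>0$, $$\int_I\left(\frac{DT^n_\theta(\psi(\theta))}{DT^n_\theta(\varphi(\theta))}\right)^s d\theta\ \ge\ |I|\,e^{-\frac{sV(T)}{|I|}}.$$
   Context: $\mathbb{T}^1=\mathbb{R}/\mathbb{Z}$, $\mathbb{T}^2=\mathbb{T}^1\times\mathbb{T}^1$, $\omega\in[0,1)$ irrational, $|I|$ is the length of $I$. Maps $T(\theta,x)=(\theta+\omega,T_\theta(x))$ on $\mathbb{T}^2$, homotopic to the identity, whose fibre maps $T_\theta$ are orientation-preserving $C^1$ circle diffeomorphisms with $DT_\theta(x)$ continuous in $(\theta,x)$; $T^n_\theta:=(T^n)_\theta$. Let $V_\theta$ be the total variation of $\log DT_\theta$ on the circle, i.e. the supremum of $\sum_{i=1}^N|\log DT_\theta(x_i)-\log DT_\theta(x_{i-1})|$ over all $N$ and all points $x_0\le x_1\le\dots\le x_N=x_0$ going once around the circle, and $V(T):=\int_{\mathbb{T}^1}V_\theta\,d\theta$. $\mathcal{T}_{\mathrm{BV}}$ is the class of such $T$ with $V(T)<\infty$. For $\varphi,\psi:I\to\mathbb{T}^1$, $[\varphi,\psi]:=\{(\theta,x):\theta\in I,\ x\in[\varphi(\theta),\psi(\theta)]\}$,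 where $[a,b]$ is the closed arc from $a$ to $b$ in the positive direction. *)

theory Defs
  imports "HOL-Analysis.Analysis"
begin

text \<open>A point of the circle T^1 = R/Z is represented by its canonical
representative in [0,1) (via frac); a point of T^2 by a pair of such representatives.
A map T(theta,x) = (theta + omega, T_theta(x)) homotopic to the identity is given by
a continuous lift F :: real => real => real with F theta (x+1) = F theta x + 1
(lift of the fibre map T_theta) and F (theta+1) x = F theta x (homotopic to identity).\<close>

definition qpf_C1 :: "(real \<Rightarrow> real \<Rightarrow> real) \<Rightarrow> bool" where
  "qpf_C1 F \<longleftrightarrow>
     continuous_on UNIV (\<lambda>p. F (fst p) (snd p)) \<and>
     (\<forall>\<theta> x. F \<theta> (x + 1) = F \<theta> x + 1) \<and>
     (\<forall>\<theta> x. F (\<theta> + 1) x = F \<theta> x) \<and>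
     (\<forall>\<theta> x. F \<theta> differentiable (at x)) \<and>
     (\<forall>\<theta> x. deriv (F \<theta>) x > 0) \<and>
     continuous_on UNIV (\<lambda>p. deriv (F (fst p)) (snd p))"

definition Tmap :: "real \<Rightarrow> (real \<Rightarrow> real \<Rightarrow> real) \<Rightarrow> real \<times> real \<Rightarrow> real \<times> real" where
  "Tmap \<omega> F p = (frac (fst p + \<omega>), frac (F (fst p) (snd p)))"

fun Fiter :: "real \<Rightarrow> (real \<Rightarrow> real \<Rightarrow> real) \<Rightarrow> nat \<Rightarrow> real \<Rightarrow> real \<Rightarrow> real" where
  "Fiter \<omega> F 0 \<theta> = id"
| "Fiter \<omega> F (Suc n) \<theta> = F (\<theta> + real n * \<omega>) \<circ> Fiter \<omega> F n \<theta>"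

text \<open>Total variation of log DT_theta on the circle: partitions
x_0 <= x_1 <= ... <= x_N = x_0 + 1 of one full turn (in the lift).\<close>
definition fibre_var :: "(real \<Rightarrow> real \<Rightarrow> real) \<Rightarrow> real \<Rightarrow> ennreal" where
  "fibre_var F \<theta> =
     (SUP p \<in> {(N, xs). (\<forall>i<N. xs i \<le> xs (Suc i)) \<and> xs N = xs 0 + 1}.
        ennreal (\<Sum>i\<in>{1..fst p}.
          \<bar>ln (deriv (F \<theta>) (snd p i)) - ln (deriv (F \<theta>) (snd p (i - 1)))\<bar>))"

definition total_var :: "(real \<Rightarrow> real \<Rightarrow> real) \<Rightarrow> ennreal" where
  "total_var F = (\<integral>\<^sup>+ \<theta>\<in>{0..<1}. fibre_var F \<theta> \<partial>lborel)"

definition circ_arc :: "real \<Rightarrow> real \<Rightarrow> real set" where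
  "circ_arc a b = {frac (a + t) | t. 0 \<le> t \<and> t \<le> frac (b - a)}"

definition band :: "real set \<Rightarrow> (real \<Rightarrow> real) \<Rightarrow> (real \<Rightarrow> real) \<Rightarrow> (real \<times> real) set" where
  "band I \<phi> \<psi> = {(frac \<theta>, y) | \<theta> y. \<theta> \<in> I \<and> y \<in> circ_arc (\<phi> \<theta>) (\<psi> \<theta>)}"

end

theory Submission
  imports Defs "HOL-Library.Periodic_Fun"
begin

text \<open>
  Write \<open>\<rho>(\<theta>)\<close> for the ratio of derivatives. By the chain rule, \<open>log \<rho>(\<theta>)\<close> is the sum over
  \<open>i < n\<close> of the increments of \<open>log DT\<^bsub>\<theta>+i\<omega>\<^esub>\<close> between the points \<open>T\<^sup>i\<^sub>\<theta> \<phi>(\<theta>)\<close> and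
  \<open>T\<^sup>i\<^sub>\<theta> \<psi>(\<theta>)\<close>, so it is at least \<open>-G(\<theta>)\<close>, where \<open>G(\<theta>)\<close> sums the absolute values of
  these increments. Jensen's inequality for \<open>exp\<close> gives
  \<open>\<integral>\<^sub>I \<rho>\<^sup>s \<ge> |I| exp (-s \<integral>\<^sub>I G / |I|)\<close>, so it suffices to show \<open>\<integral>\<^sub>I G \<le> V(T)\<close>.

  Substituting \<open>\<theta> = t + k - i\<omega>\<close> turns \<open>\<integral>\<^sub>I G\<close> into an integral over \<open>t \<in> [0,1)\<close> of a sum
  over pairs \<open>(i, k)\<close>, whose terms are the increments of \<open>log DT\<^sub>t\<close> across the arcs
  \<open>T\<^sup>i\<^sub>\<theta>[\<phi>(\<theta>), \<psi>(\<theta>)]\<close> in the fibre over \<open>t\<close>. These arcs lie in the pairwise disjoint sets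
  \<open>T\<^sup>i[\<phi>, \<psi>]\<close>, and distinct \<open>\<theta>\<close> with the same \<open>i\<close> are distinct points of the circle, so
  the arcs are pairwise disjoint and the sum is bounded by the variation \<open>V\<^sub>t\<close>, whose integral
  is \<open>V(T)\<close>.
\<close>

section \<open>Variation along partitions\<close>

definition partition_variation :: "(real \<Rightarrow> real) \<Rightarrow> (nat \<Rightarrow> real) \<Rightarrow> nat \<Rightarrow> real" where
  "partition_variation g xs N = (\<Sum>i\<in>{1..N}. \<bar>g (xs i) - g (xs (i - 1))\<bar>)"

definition variation_at_least :: "(real \<Rightarrow> real) \<Rightarrow> real \<Rightarrow> real \<Rightarrow> real \<Rightarrow> bool" where
  "variation_at_least g c d v \<longleftrightarrow>
     (\<exists>N xs. (\<forall>i<N. xs i \<le> xs (Suc i)) \<and> xs 0 = c \<and> xs N = d \<and> v \<le> partition_variation g xs N)"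

lemma partition_variation_join:
  assumes "ys 0 = xs N"
  shows "partition_variation g (\<lambda>i. if i \<le> N then xs i else ys (i - N)) (N + M) =
    partition_variation g xs N + partition_variation g ys M"
proof -
  define zs where "zs i = (if i \<le> N then xs i else ys (i - N))" for i
  have "{1..N + M} = {1..N} \<union> {1 + N..M + N}" by auto
  then have "partition_variation g zs (N + M) =
      partition_variation g zs N + (\<Sum>i\<in>{1 + N..M + N}. \<bar>g (zs i) - g (zs (i - 1))\<bar>)"
    unfolding partition_variation_def by (simp add: sum.union_disjoint)
  also have "(\<Sum>i\<in>{1 + N..M + N}. \<bar>g (zs i) - g (zs (i - 1))\<bar>) =
      (\<Sum>i\<in>{1..M}. \<bar>g (zs (i + N)) - g (zs (i + N - 1))\<bar>)"
    by (rule sum.shift_bounds_cl_nat_ivl)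
  also have "\<dots> = partition_variation g ys M"
    unfolding partition_variation_def
  proof (intro sum.cong refl)
    fix i assume "i \<in> {1..M}"
    then obtain j where "i = Suc j" by (cases i) auto
    then show "\<bar>g (zs (i + N)) - g (zs (i + N - 1))\<bar> = \<bar>g (ys i) - g (ys (i - 1))\<bar>"
      using assms by (auto simp: zs_def)
  qed
  also have "partition_variation g zs N = partition_variation g xs N"
    unfolding partition_variation_def by (intro sum.cong) (auto simp: zs_def)
  finally show ?thesis by (simp add: zs_def)
qed

lemma variation_at_least_step:
  assumes "c \<le> d" "v \<le> \<bar>g d - g c\<bar>"
  shows "variation_at_least g c d v"
  unfolding variation_at_least_def partition_variation_def
  by (rule exI[of _ 1], rule exI[of _ "\<lambda>i. if i = 0 then c else d"]) (use assms in auto)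

lemma variation_at_least_join:
  assumes "variation_at_least g c e v" "variation_at_least g e d w"
  shows "variation_at_least g c d (v + w)"
proof -
  obtain N xs where xs: "\<forall>i<N. xs i \<le> xs (Suc i)" "xs 0 = c" "xs N = e"
    "v \<le> partition_variation g xs N"
    using assms(1) unfolding variation_at_least_def by blast
  obtain M ys where ys: "\<forall>i<M. ys i \<le> ys (Suc i)" "ys 0 = e" "ys M = d"
    "w \<le> partition_variation g ys M"
    using assms(2) unfolding variation_at_least_def by blast
  define zs where "zs i = (if i \<le> N then xs i else ys (i - N))" for i
  have "zs i \<le> zs (Suc i)" if "i < N + M" for i
  proof (cases "i = N")
    case True
    then show ?thesis using that xs(3) ys(1,2) by (auto simp: zs_def)
  qed (use that xs(1) ys(1) in \<open>auto simp: zs_def Suc_diff_le\<close>)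
  moreover have "zs 0 = c" "zs (N + M) = d"
    using xs(2,3) ys(2,3) by (auto simp: zs_def)
  moreover have "partition_variation g zs (N + M) =
      partition_variation g xs N + partition_variation g ys M"
    unfolding zs_def by (rule partition_variation_join) (simp add: xs(3) ys(2))
  ultimately show ?thesis
    unfolding variation_at_least_def using xs(4) ys(4)
    by (intro exI[of _ "N + M"] exI[of _ zs]) auto
qed

lemma variation_at_least_disjoint_intervals:
  fixes a b :: "'j \<Rightarrow> real"
  assumes "finite J"
    and "\<And>j. j \<in> J \<Longrightarrow> c \<le> a j \<and> a j \<le> b j \<and> b j \<le> d" and "c \<le> d"
    and "\<And>j j'. j \<in> J \<Longrightarrow> j' \<in> J \<Longrightarrow> j \<noteq> j' \<Longrightarrow> b j < a j' \<or> b j' < a j"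
  shows "variation_at_least g c d (\<Sum>j\<in>J. \<bar>g (b j) - g (a j)\<bar>)"
  using assms
proof (induction J arbitrary: d rule: finite_ranking_induct[where f = a])
  case empty
  then show ?case by (simp add: variation_at_least_step)
next
  case (insert x S)
  show ?case
  proof (cases "x \<in> S")
    case True
    then show ?thesis using insert by (simp add: insert_absorb)
  next
    case False
    have "b y < a x" if "y \<in> S" for y
      using insert.prems(1)[of x] insert.prems(1)[of y] insert.prems(3)[of x y]
        insert.hyps(2)[OF that] that False by force
    then have "variation_at_least g c (a x) (\<Sum>j\<in>S. \<bar>g (b j) - g (a j)\<bar>)"
      using insert.prems by (intro insert.IH) (auto simp: less_imp_le)
    moreover have "variation_at_least g (a x) (b x) \<bar>g (b x) - g (a x)\<bar>"
      using insert.prems(1) by (intro variation_at_least_step) auto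
    moreover have "variation_at_least g (b x) d 0"
      using insert.prems(1) by (intro variation_at_least_step) auto
    ultimately have "variation_at_least g c d
        ((\<Sum>j\<in>S. \<bar>g (b j) - g (a j)\<bar>) + \<bar>g (b x) - g (a x)\<bar> + 0)"
      by (intro variation_at_least_join)
    then show ?thesis using False insert.hyps(1) by (simp add: add.commute)
  qed
qed

lemma separated_if_frac_disjoint:
  fixes a b a' b' :: real
  assumes "a \<le> b" "a' \<le> b'"
    and "\<And>x x'. x \<in> {a..b} \<Longrightarrow> x' \<in> {a'..b'} \<Longrightarrow> frac x \<noteq> frac x'"
  shows "b < a' \<or> b' < a"
  using assms(3)[of "max a a'" "max a a'"] assms(1,2)
  by (cases "a \<le> a'") (auto simp flip: not_le)

lemma variation_at_least_disjoint_arcs: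
  fixes a b :: "'j \<Rightarrow> real"
  assumes g: "\<And>x. g (x + 1) = g x" and "finite J"
    and arcs: "\<And>j. j \<in> J \<Longrightarrow> a j \<le> b j \<and> b j < a j + 1"
    and disjoint: "\<And>j j' x x'. j \<in> J \<Longrightarrow> j' \<in> J \<Longrightarrow> j \<noteq> j' \<Longrightarrow>
      x \<in> {a j..b j} \<Longrightarrow> x' \<in> {a j'..b j'} \<Longrightarrow> frac x \<noteq> frac x'"
  shows "\<exists>c. variation_at_least g c (c + 1) (\<Sum>j\<in>J. \<bar>g (b j) - g (a j)\<bar>)"
proof (cases "J = {}")
  case True
  then show ?thesis by (auto intro!: exI[of _ 0] variation_at_least_step)
next
  case False
  then obtain j0 where j0: "j0 \<in> J" by auto
  have separated: "b j + of_int m < a j' + of_int m' \<or> b j' + of_int m' < a j + of_int m"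
    if "j \<in> J" "j' \<in> J" "j \<noteq> j'" for j j' m m'
  proof (rule separated_if_frac_disjoint)
    fix x x'
    assume "x \<in> {a j + of_int m..b j + of_int m}" "x' \<in> {a j' + of_int m'..b j' + of_int m'}"
    then show "frac x \<noteq> frac x'"
      using disjoint[OF that, of "x - of_int m" "x' - of_int m'"] by (auto simp: frac_def)
  qed (use arcs that in auto)
  \<comment> \<open>Shifting every arc by an integer so that it starts in \<open>[a j0, a j0 + 1)\<close> turns disjointness
    on the circle into disjointness on the line.\<close>
  define k where "k j = - \<lfloor>a j - a j0\<rfloor>" for j
  have start: "a j0 \<le> a j + of_int (k j) \<and> a j + of_int (k j) < a j0 + 1" for j
    unfolding k_def by linarith
  have "b j + of_int (k j) \<le> a j0 + 1" if "j \<in> J" for j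
  proof (cases "j = j0")
    case False
    then show ?thesis
      using separated[OF that j0 False, of "k j" 1] start[of j] arcs[OF j0] by auto
  qed (use arcs[OF j0] in \<open>simp add: k_def\<close>)
  then have "variation_at_least g (a j0) (a j0 + 1)
      (\<Sum>j\<in>J. \<bar>g (b j + of_int (k j)) - g (a j + of_int (k j))\<bar>)"
    using \<open>finite J\<close> start separated arcs
    by (intro variation_at_least_disjoint_intervals) (auto simp: less_imp_le)
  moreover have "g (x + of_int m) = g x" for x m
  proof -
    interpret periodic_fun_simple' g by standard (rule g)
    show ?thesis by (rule plus_of_int)
  qed
  ultimately show ?thesis by auto
qed

lemma fibre_var_ge:
  assumes "variation_at_least (\<lambda>x. ln (deriv (F \<theta>) x)) c (c + 1) v"
  shows "ennreal v \<le> fibre_var F \<theta>"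
proof -
  obtain N xs where "\<forall>i<N. xs i \<le> xs (Suc i)" "xs 0 = c" "xs N = c + 1"
    "v \<le> partition_variation (\<lambda>x. ln (deriv (F \<theta>) x)) xs N"
    using assms unfolding variation_at_least_def by blast
  then show ?thesis
    unfolding fibre_var_def partition_variation_def
    by (intro SUP_upper2[of "(N, xs)"] ennreal_leI) auto
qed

lemma bounded_imp_finite_floor_translates:
  fixes I :: "real set"
  assumes "bounded I"
  obtains K :: "int set" where "finite K" "\<And>x i. x \<in> I \<Longrightarrow> i < n \<Longrightarrow> \<lfloor>x + real i * \<omega>\<rfloor> \<in> K"
proof -
  obtain B where B: "\<And>x. x \<in> I \<Longrightarrow> \<bar>x\<bar> \<le> B"
    using assms unfolding bounded_iff by auto
  define C where "C = B + real n * \<bar>\<omega>\<bar>"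
  have "\<lfloor>x + real i * \<omega>\<rfloor> \<in> {- \<lceil>C\<rceil>..\<lceil>C\<rceil>}" if "x \<in> I" "i < n" for x i
  proof -
    have "\<bar>real i * \<omega>\<bar> \<le> real n * \<bar>\<omega>\<bar>"
      using that(2) by (simp add: abs_mult mult_right_mono)
    then have "\<bar>x + real i * \<omega>\<bar> \<le> C"
      using B[OF that(1)] unfolding C_def by linarith
    then show ?thesis
      by (simp add: floor_le_iff le_floor_iff) linarith
  qed
  then show thesis
    using that[of "{- \<lceil>C\<rceil>..\<lceil>C\<rceil>}"] by blast
qed

lemma nn_integral_eq_sum_unit_translates:
  fixes g :: "real \<Rightarrow> ennreal"
  assumes [measurable]: "g \<in> borel_measurable borel" and "finite K"
    and K: "\<And>x. g x \<noteq> 0 \<Longrightarrow> \<lfloor>x + c\<rfloor> \<in> K"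
  shows "(\<integral>\<^sup>+x. g x \<partial>lborel) = (\<Sum>k\<in>K. \<integral>\<^sup>+t\<in>{0..<1}. g (t + of_int k - c) \<partial>lborel)"
proof -
  have translate: "(\<integral>\<^sup>+t\<in>{0..<1}. g (t + of_int k - c) \<partial>lborel) =
      (\<integral>\<^sup>+x. g x * indicator {0..<1} (x - of_int k + c) \<partial>lborel)" for k
    using nn_integral_real_affine
        [of "\<lambda>x. g x * indicator {0..<1} (x - of_int k + c)" 1 "of_int k - c"]
    by (simp add: algebra_simps)
  have "(\<Sum>k\<in>K. g x * indicator {0..<1} (x - of_int k + c)) = g x" for x
  proof (cases "g x = 0")
    case False
    have "x - of_int k + c \<in> {0..<1} \<longleftrightarrow> k = \<lfloor>x + c\<rfloor>" for k
      unfolding eq_commute[of k] floor_eq_iff by auto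
    then show ?thesis
      using K[OF False] \<open>finite K\<close> by (simp add: indicator_def if_distrib sum.delta' cong: if_cong)
  qed simp
  then show ?thesis
    by (simp add: translate nn_integral_sum[symmetric])
qed

lemma set_integrable_bounded:
  fixes f :: "'a \<Rightarrow> real"
  assumes "A \<in> sets M" "emeasure M A < \<infinity>" "f \<in> borel_measurable M"
    and "\<And>x. x \<in> A \<Longrightarrow> \<bar>f x\<bar> \<le> B"
  shows "set_integrable M A f"
  unfolding set_integrable_def
  by (rule integrableI_bounded_set[where A = A and B = B]) (use assms in auto)

lemma set_integral_le_enn2real:
  fixes f :: "'a \<Rightarrow> real"
  assumes "set_integrable M A f" "\<And>x. 0 \<le> f x"
    and "(\<integral>\<^sup>+x\<in>A. ennreal (f x) \<partial>M) \<le> V" "V < \<infinity>"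
  shows "(LINT x:A|M. f x) \<le> enn2real V"
proof -
  have "ennreal (LINT x:A|M. f x) = (\<integral>\<^sup>+x. ennreal (indicator A x * f x) \<partial>M)"
    using assms(1,2) unfolding set_integrable_def set_lebesgue_integral_def
    by (subst nn_integral_eq_integral) auto
  also have "\<dots> = (\<integral>\<^sup>+x\<in>A. ennreal (f x) \<partial>M)"
    by (intro nn_integral_cong) (simp split: split_indicator)
  also have "\<dots> \<le> V"
    by (fact assms(3))
  finally have "enn2real (ennreal (LINT x:A|M. f x)) \<le> enn2real V"
    using assms(4) by (intro enn2real_mono) auto
  moreover have "(LINT x:A|M. f x) \<le> enn2real (ennreal (LINT x:A|M. f x))"
    by (cases "0 \<le> (LINT x:A|M. f x)") (auto simp: ennreal_neg)
  ultimately show ?thesis by linarith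
qed

lemma measure_mul_exp_mean_le:
  fixes f :: "'a \<Rightarrow> real"
  assumes "set_integrable M A f" "set_integrable M A (\<lambda>x. exp (f x))"
    and "A \<in> sets M" "measure M A > 0"
  shows "measure M A * exp ((LINT x:A|M. f x) / measure M A) \<le> (LINT x:A|M. exp (f x))"
proof -
  define m where "m = measure M A"
  define c where "c = (LINT x:A|M. f x) / m"
  have finite: "emeasure M A \<noteq> \<infinity>"
    using assms(4) measure_zero_top[of M A] by auto
  have const: "set_integrable M A (\<lambda>_. 1 - c)"
    using assms(3) finite
    by (intro set_integrable_bounded[where B = "\<bar>1 - c\<bar>"]) (auto simp: less_top)
  have tangent: "exp c * ((1 - c) + f x) \<le> exp (f x)" for x
    using mult_left_mono[OF exp_ge_add_one_self[of "f x - c"], of "exp c"]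
    by (simp add: exp_diff add.commute add_diff_eq)
  have "(LINT x:A|M. exp c * ((1 - c) + f x)) = exp c * ((1 - c) * m + (LINT x:A|M. f x))"
    using set_integral_add(2)[OF const assms(1)] set_integral_const[OF assms(3) finite, of "1 - c"]
    by (simp add: m_def)
  also have "\<dots> = exp c * m"
    using assms(4) by (simp add: c_def m_def algebra_simps)
  finally have "exp c * m = (LINT x:A|M. exp c * ((1 - c) + f x))" ..
  also have "\<dots> \<le> (LINT x:A|M. exp (f x))"
    using set_integral_add(1)[OF const assms(1)] assms(2) tangent
    by (intro set_integral_mono set_integrable_mult_right)
  finally show ?thesis by (simp add: m_def c_def mult.commute)
qed

section \<open>Lifts of the skew product\<close>

lemma degree_one_add_of_int:
  fixes g :: "real \<Rightarrow> real"
  assumes "\<And>x. g (x + 1) = g x + 1"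
  shows "g (x + of_int k) = g x + of_int k"
proof -
  interpret periodic_fun_simple' "\<lambda>x. g x - x"
    by standard (simp add: assms)
  show ?thesis using plus_of_int[of x k] by simp
qed

lemma frac_add_of_int [simp]: "frac (x + of_int k) = frac x"
  by (simp add: frac_def)

locale skew_product =
  fixes \<omega> :: real and F :: "real \<Rightarrow> real \<Rightarrow> real"
  assumes qpf: "qpf_C1 F"
begin

lemma continuous_on_F: "continuous_on UNIV (\<lambda>p. F (fst p) (snd p))"
  and F_add_1: "F \<theta> (x + 1) = F \<theta> x + 1"
  and F_periodic_1: "F (\<theta> + 1) x = F \<theta> x"
  and F_differentiable: "F \<theta> differentiable (at x)"
  and deriv_F_pos: "deriv (F \<theta>) x > 0"
  and continuous_on_deriv_F: "continuous_on UNIV (\<lambda>p. deriv (F (fst p)) (snd p))"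
  using qpf unfolding qpf_C1_def by blast+

lemma F_add_of_int: "F \<theta> (x + of_int k) = F \<theta> x + of_int k"
  by (rule degree_one_add_of_int) (rule F_add_1)

lemma F_periodic: "F (\<theta> + of_int k) = F \<theta>"
proof -
  interpret periodic_fun_simple' F
    by standard (rule ext, rule F_periodic_1)
  show ?thesis by (rule plus_of_int)
qed

lemma DERIV_F: "(F \<theta> has_real_derivative deriv (F \<theta>) x) (at x)"
  using F_differentiable DERIV_deriv_iff_real_differentiable by blast

lemma deriv_F_add_of_int: "deriv (F \<theta>) (x + of_int k) = deriv (F \<theta>) x"
proof -
  have "((\<lambda>y. F \<theta> y + of_int k) has_real_derivative deriv (F \<theta>) (x + of_int k)) (at x)"
    using DERIV_shift[of "F \<theta>" "deriv (F \<theta>) (x + of_int k)" x "of_int k"] DERIV_F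
    by (simp add: F_add_of_int)
  moreover have "((\<lambda>y. F \<theta> y + of_int k) has_real_derivative deriv (F \<theta>) x) (at x)"
    using DERIV_add[OF DERIV_F DERIV_const] by simp
  ultimately show ?thesis by (rule DERIV_unique)
qed

lemma F_strict_mono: "x < y \<Longrightarrow> F \<theta> x < F \<theta> y"
  using DERIV_pos_imp_increasing[of x y "F \<theta>"] DERIV_F deriv_F_pos by blast

lemma Fiter_add_of_int: "Fiter \<omega> F i \<theta> (x + of_int k) = Fiter \<omega> F i \<theta> x + of_int k"
  by (induction i) (auto simp: F_add_of_int)

lemma Fiter_strict_mono: "x < y \<Longrightarrow> Fiter \<omega> F i \<theta> x < Fiter \<omega> F i \<theta> y"
  by (induction i) (auto simp: F_strict_mono)

lemma Fiter_mono: "x \<le> y \<Longrightarrow> Fiter \<omega> F i \<theta> x \<le> Fiter \<omega> F i \<theta> y"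
  using Fiter_strict_mono[of x y i \<theta>] by (cases "x = y") auto

lemma continuous_on_Fiter: "continuous_on UNIV (\<lambda>p. Fiter \<omega> F i (fst p) (snd p))"
proof (induction i)
  case (Suc i)
  have "continuous_on UNIV
      ((\<lambda>p. F (fst p) (snd p)) \<circ> (\<lambda>p. (fst p + real i * \<omega>, Fiter \<omega> F i (fst p) (snd p))))"
    by (intro continuous_on_compose continuous_intros Suc continuous_on_subset[OF continuous_on_F])
       auto
  then show ?case by (simp add: comp_def)
qed (simp add: continuous_on_snd)

lemma continuous_on_Fiter_fibre: "continuous_on UNIV (Fiter \<omega> F i \<theta>)"
  using continuous_on_compose[OF _ continuous_on_subset[OF continuous_on_Fiter], of UNIV "Pair \<theta>"]
  by (simp add: comp_def continuous_intros)

lemma DERIV_Fiter: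
  "(Fiter \<omega> F i \<theta> has_real_derivative
     (\<Prod>j<i. deriv (F (\<theta> + real j * \<omega>)) (Fiter \<omega> F j \<theta> x))) (at x)"
proof (induction i)
  case (Suc i)
  from DERIV_chain[OF DERIV_F Suc] show ?case by (simp add: mult.commute comp_def)
qed (simp add: id_def)

lemma Tmap_pow_frac:
  "(Tmap \<omega> F ^^ i) (frac \<theta>, frac y) = (frac (\<theta> + real i * \<omega>), frac (Fiter \<omega> F i \<theta> y))"
proof (induction i)
  case (Suc i)
  have "frac (F (frac a) (frac z)) = frac (F a z)" for a z
    using F_periodic[of a "- \<lfloor>a\<rfloor>"] F_add_of_int[of a z "- \<lfloor>z\<rfloor>"]
    by (simp add: frac_def)
  moreover have "frac (frac (\<theta> + real i * \<omega>) + \<omega>) = frac (\<theta> + real (Suc i) * \<omega>)"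
    by (simp add: frac_def algebra_simps)
  ultimately show ?case using Suc by (simp add: Tmap_def)
qed simp

definition log_deriv :: "real \<Rightarrow> real \<Rightarrow> real" where
  "log_deriv \<theta> x = ln (deriv (F \<theta>) x)"

lemma continuous_on_log_deriv: "continuous_on UNIV (\<lambda>p. log_deriv (fst p) (snd p))"
  unfolding log_deriv_def
  by (intro continuous_on_ln continuous_on_deriv_F) (use deriv_F_pos in \<open>auto simp: less_le\<close>)

lemma log_deriv_periodic: "log_deriv (\<theta> + of_int k) x = log_deriv \<theta> x"
  by (simp add: log_deriv_def F_periodic)

lemma log_deriv_add_of_int: "log_deriv \<theta> (x + of_int k) = log_deriv \<theta> x"
  by (simp add: log_deriv_def deriv_F_add_of_int)

lemma log_deriv_bounded: "\<exists>M. \<forall>\<theta> x. \<bar>log_deriv \<theta> x\<bar> \<le> M"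
proof -
  have "compact ((\<lambda>p. log_deriv (fst p) (snd p)) ` ({0..1} \<times> {0..1}))"
    by (intro compact_continuous_image continuous_on_subset[OF continuous_on_log_deriv]
        compact_Times) auto
  then obtain M where M: "\<And>p. p \<in> {0..1} \<times> {0..1} \<Longrightarrow> \<bar>log_deriv (fst p) (snd p)\<bar> \<le> M"
    by (fastforce dest: compact_imp_bounded simp: bounded_iff)
  have "\<bar>log_deriv \<theta> x\<bar> \<le> M" for \<theta> x
  proof -
    have "log_deriv \<theta> x = log_deriv (frac \<theta>) (frac x)"
      using log_deriv_periodic[of "frac \<theta>" "\<lfloor>\<theta>\<rfloor>"] log_deriv_add_of_int[of _ "frac x" "\<lfloor>x\<rfloor>"]
      by (simp add: frac_def)
    then show ?thesis
      using M[of "(frac \<theta>, frac x)"] frac_lt_1[of \<theta>] frac_lt_1[of x] by (simp add: less_imp_le)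
  qed
  then show ?thesis by blast
qed

lemma borel_measurable_log_deriv_Fiter:
  assumes "f \<in> borel_measurable borel"
  shows "(\<lambda>\<theta>. log_deriv (\<theta> + real i * \<omega>) (Fiter \<omega> F i \<theta> (f \<theta>))) \<in> borel_measurable borel"
proof -
  have "continuous_on UNIV ((\<lambda>p. log_deriv (fst p) (snd p)) \<circ>
      (\<lambda>p. (fst p + real i * \<omega>, Fiter \<omega> F i (fst p) (snd p))))"
    by (intro continuous_on_compose continuous_intros continuous_on_Fiter
        continuous_on_subset[OF continuous_on_log_deriv]) auto
  moreover have "(\<lambda>\<theta>. (\<theta>, f \<theta>)) \<in> borel_measurable borel"
    using assms by measurable
  ultimately show ?thesis
    by (auto dest: borel_measurable_continuous_on simp: comp_def)
qed

lemma ln_deriv_Fiter: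
  "ln (deriv (Fiter \<omega> F n \<theta>) x) = (\<Sum>i<n. log_deriv (\<theta> + real i * \<omega>) (Fiter \<omega> F i \<theta> x))"
  using DERIV_imp_deriv[OF DERIV_Fiter] deriv_F_pos
  by (simp add: ln_prod log_deriv_def less_imp_neq[symmetric])

lemma deriv_Fiter_pos: "deriv (Fiter \<omega> F n \<theta>) x > 0"
  using DERIV_imp_deriv[OF DERIV_Fiter] deriv_F_pos by (simp add: prod_pos)

end

section \<open>The images of the band over a common fibre\<close>

locale disjoint_band = skew_product +
  fixes I :: "real set" and n :: nat and \<phi> \<psi> :: "real \<Rightarrow> real"
  assumes inj_frac: "inj_on frac I"
    and band_images_disjoint: "\<forall>i<n. \<forall>j<n. i \<noteq> j \<longrightarrow>
           (Tmap \<omega> F ^^ i) ` band I \<phi> \<psi> \<inter> (Tmap \<omega> F ^^ j) ` band I \<phi> \<psi> = {}"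
begin

definition arc_start :: "nat \<Rightarrow> real \<Rightarrow> real" where
  "arc_start i \<theta> = Fiter \<omega> F i \<theta> (\<phi> \<theta>)"

definition arc_end :: "nat \<Rightarrow> real \<Rightarrow> real" where
  "arc_end i \<theta> = Fiter \<omega> F i \<theta> (\<phi> \<theta> + frac (\<psi> \<theta> - \<phi> \<theta>))"

definition log_deriv_gap :: "nat \<Rightarrow> real \<Rightarrow> real" where
  "log_deriv_gap i \<theta> = log_deriv (\<theta> + real i * \<omega>) (Fiter \<omega> F i \<theta> (\<psi> \<theta>)) -
     log_deriv (\<theta> + real i * \<omega>) (Fiter \<omega> F i \<theta> (\<phi> \<theta>))"

lemma log_deriv_gap_eq_arc:
  "log_deriv_gap i \<theta> = log_deriv (\<theta> + real i * \<omega>) (arc_end i \<theta>) -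
     log_deriv (\<theta> + real i * \<omega>) (arc_start i \<theta>)"
proof -
  have "\<psi> \<theta> = (\<phi> \<theta> + frac (\<psi> \<theta> - \<phi> \<theta>)) + of_int \<lfloor>\<psi> \<theta> - \<phi> \<theta>\<rfloor>"
    by (simp add: frac_def)
  then show ?thesis
    unfolding log_deriv_gap_def arc_start_def arc_end_def
    by (metis Fiter_add_of_int log_deriv_add_of_int)
qed

lemma arc_bounds: "arc_start i \<theta> \<le> arc_end i \<theta> \<and> arc_end i \<theta> < arc_start i \<theta> + 1"
  using Fiter_mono[of "\<phi> \<theta>" "\<phi> \<theta> + frac (\<psi> \<theta> - \<phi> \<theta>)" i \<theta>]
    Fiter_strict_mono[of "\<phi> \<theta> + frac (\<psi> \<theta> - \<phi> \<theta>)" "\<phi> \<theta> + of_int 1" i \<theta>]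
    frac_lt_1[of "\<psi> \<theta> - \<phi> \<theta>"]
  unfolding arc_start_def arc_end_def Fiter_add_of_int by simp

lemma arc_in_band_image:
  assumes "\<theta> \<in> I" "\<theta> + real i * \<omega> = t + of_int k" "t \<in> {0..<1}"
    and "z \<in> {arc_start i \<theta>..arc_end i \<theta>}"
  shows "(t, frac z) \<in> (Tmap \<omega> F ^^ i) ` band I \<phi> \<psi>"
proof -
  obtain y where y: "\<phi> \<theta> \<le> y" "y \<le> \<phi> \<theta> + frac (\<psi> \<theta> - \<phi> \<theta>)" "Fiter \<omega> F i \<theta> y = z"
    using IVT[of "Fiter \<omega> F i \<theta>" "\<phi> \<theta>" z "\<phi> \<theta> + frac (\<psi> \<theta> - \<phi> \<theta>)"] assms(4)
      continuous_on_Fiter_fibre[of i \<theta>]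
    by (auto simp: arc_start_def arc_end_def continuous_on_eq_continuous_at)
  have "frac y \<in> circ_arc (\<phi> \<theta>) (\<psi> \<theta>)"
    unfolding circ_arc_def using y by (intro CollectI exI[of _ "y - \<phi> \<theta>"]) auto
  then have "(frac \<theta>, frac y) \<in> band I \<phi> \<psi>"
    unfolding band_def using assms(1) by blast
  moreover have "(Tmap \<omega> F ^^ i) (frac \<theta>, frac y) = (t, frac z)"
    using assms(2,3) y(3) by (simp add: Tmap_pow_frac frac_eq)
  ultimately show ?thesis by force
qed

lemma fibre_arcs_disjoint:
  assumes "t \<in> {0..<1}" "i < n" "i' < n" "(i, k) \<noteq> (i', k')"
    and "t + of_int k - real i * \<omega> \<in> I" "t + of_int k' - real i' * \<omega> \<in> I"
    and "z \<in> {arc_start i (t + of_int k - real i * \<omega>)..arc_end i (t + of_int k - real i * \<omega>)}"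
    and "z' \<in> {arc_start i' (t + of_int k' - real i' * \<omega>)..
                 arc_end i' (t + of_int k' - real i' * \<omega>)}"
  shows "frac z \<noteq> frac z'"
proof
  assume frac_eq: "frac z = frac z'"
  show False
  proof (cases "i = i'")
    case True
    have "frac (t + of_int k - real i * \<omega>) = frac (t + of_int k' - real i * \<omega>)"
      using frac_add_of_int[of "t + of_int k' - real i * \<omega>" "k - k'"] by (simp add: algebra_simps)
    then have "k = k'"
      using inj_frac assms(5,6) True by (auto dest: inj_onD)
    then show False using True assms(4) by simp
  next
    case False
    have "(t, frac z) \<in> (Tmap \<omega> F ^^ i) ` band I \<phi> \<psi>"
      using assms by (intro arc_in_band_image) auto
    moreover have "(t, frac z) \<in> (Tmap \<omega> F ^^ i') ` band I \<phi> \<psi>"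
      unfolding frac_eq using assms by (intro arc_in_band_image) auto
    ultimately show False using band_images_disjoint assms(2,3) False by blast
  qed
qed

lemma fibre_variation_bound:
  assumes "t \<in> {0..<1}" "finite K"
  shows "ennreal (\<Sum>i<n. \<Sum>k\<in>K. indicator I (t + of_int k - real i * \<omega>) *
      \<bar>log_deriv_gap i (t + of_int k - real i * \<omega>)\<bar>) \<le> fibre_var F t"
    (is "ennreal ?S \<le> _")
proof -
  define \<theta> where "\<theta> p = t + of_int (snd p) - real (fst p) * \<omega>" for p :: "nat \<times> int"
  define J where "J = {p \<in> {..<n} \<times> K. \<theta> p \<in> I}"
  define a where "a p = arc_start (fst p) (\<theta> p)" for p
  define b where "b p = arc_end (fst p) (\<theta> p)" for p
  have "?S = (\<Sum>p\<in>{..<n} \<times> K. if \<theta> p \<in> I then \<bar>log_deriv_gap (fst p) (\<theta> p)\<bar> else 0)"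
    unfolding sum.cartesian_product \<theta>_def by (intro sum.cong) auto
  also have "\<dots> = (\<Sum>p\<in>{..<n} \<times> K.
      if \<theta> p \<in> I then \<bar>log_deriv t (b p) - log_deriv t (a p)\<bar> else 0)"
  proof (intro sum.cong refl)
    fix p :: "nat \<times> int"
    have "\<theta> p + real (fst p) * \<omega> = t + of_int (snd p)"
      by (simp add: \<theta>_def)
    then show "(if \<theta> p \<in> I then \<bar>log_deriv_gap (fst p) (\<theta> p)\<bar> else 0) =
        (if \<theta> p \<in> I then \<bar>log_deriv t (b p) - log_deriv t (a p)\<bar> else 0)"
      by (simp add: log_deriv_gap_eq_arc a_def b_def log_deriv_periodic)
  qed
  also have "\<dots> = (\<Sum>p\<in>J. \<bar>log_deriv t (b p) - log_deriv t (a p)\<bar>)"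
    unfolding J_def by (rule sum.inter_filter[symmetric]) (use assms(2) in simp)
  finally have sum_eq: "?S = (\<Sum>p\<in>J. \<bar>log_deriv t (b p) - log_deriv t (a p)\<bar>)" .
  have "\<exists>c. variation_at_least (log_deriv t) c (c + 1)
      (\<Sum>p\<in>J. \<bar>log_deriv t (b p) - log_deriv t (a p)\<bar>)"
  proof (rule variation_at_least_disjoint_arcs)
    show "log_deriv t (x + 1) = log_deriv t x" for x
      using log_deriv_add_of_int[of t x 1] by simp
    show "finite J" unfolding J_def using assms(2) by simp
    show "a p \<le> b p \<and> b p < a p + 1" for p
      unfolding a_def b_def by (rule arc_bounds)
    show "frac x \<noteq> frac x'"
      if "p \<in> J" "p' \<in> J" "p \<noteq> p'" "x \<in> {a p..b p}" "x' \<in> {a p'..b p'}" for p p' x x'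
      using that assms(1)
      by (intro fibre_arcs_disjoint[of t "fst p" "fst p'" "snd p" "snd p'"])
        (auto simp: J_def a_def b_def \<theta>_def prod_eq_iff)
  qed
  then show ?thesis
    unfolding sum_eq by (auto intro: fibre_var_ge simp: log_deriv_def[abs_def])
qed

lemma deriv_ratio_powr_eq:
  "(deriv (Fiter \<omega> F n \<theta>) (\<psi> \<theta>) / deriv (Fiter \<omega> F n \<theta>) (\<phi> \<theta>)) powr s =
    exp (s * (\<Sum>i<n. log_deriv_gap i \<theta>))"
  using deriv_Fiter_pos[of n \<theta> "\<psi> \<theta>"] deriv_Fiter_pos[of n \<theta> "\<phi> \<theta>"]
  by (simp add: powr_def ln_div ln_deriv_Fiter log_deriv_gap_def sum_subtractf mult.commute)

lemma log_deriv_gap_bounded: "\<exists>M. \<forall>i \<theta>. \<bar>log_deriv_gap i \<theta>\<bar> \<le> M"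
proof -
  obtain M where M: "\<And>\<theta> x. \<bar>log_deriv \<theta> x\<bar> \<le> M"
    using log_deriv_bounded by blast
  have "\<bar>log_deriv_gap i \<theta>\<bar> \<le> 2 * M" for i \<theta>
    using M[of "\<theta> + real i * \<omega>" "Fiter \<omega> F i \<theta> (\<psi> \<theta>)"]
      M[of "\<theta> + real i * \<omega>" "Fiter \<omega> F i \<theta> (\<phi> \<theta>)"]
    unfolding log_deriv_gap_def by arith
  then show ?thesis by blast
qed

end

section \<open>Integration over the base\<close>

locale measurable_band = disjoint_band +
  assumes interval: "is_interval I" and bounded: "bounded I"
    and measurable_\<phi>: "\<phi> \<in> borel_measurable borel" and measurable_\<psi>: "\<psi> \<in> borel_measurable borel"
begin

lemma sets_I [measurable]: "I \<in> sets borel"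
  using interval by (rule real_interval_borel_measurable)

lemma borel_measurable_log_deriv_gap [measurable]: "log_deriv_gap i \<in> borel_measurable borel"
  unfolding log_deriv_gap_def
  using borel_measurable_log_deriv_Fiter[OF measurable_\<psi>, of i]
    borel_measurable_log_deriv_Fiter[OF measurable_\<phi>, of i]
  by measurable

lemma nn_integral_log_deriv_gap_le:
  "(\<integral>\<^sup>+\<theta>\<in>I. ennreal (\<Sum>i<n. \<bar>log_deriv_gap i \<theta>\<bar>) \<partial>lborel) \<le> total_var F"
proof -
  obtain K where "finite K" and K: "\<And>x i. x \<in> I \<Longrightarrow> i < n \<Longrightarrow> \<lfloor>x + real i * \<omega>\<rfloor> \<in> K"
    using bounded_imp_finite_floor_translates[OF bounded] by blast
  define h where "h i k t = ennreal (indicator I (t + of_int k - real i * \<omega>) *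
      \<bar>log_deriv_gap i (t + of_int k - real i * \<omega>)\<bar>)" for i k t
  have "(\<integral>\<^sup>+\<theta>\<in>I. ennreal (\<Sum>i<n. \<bar>log_deriv_gap i \<theta>\<bar>) \<partial>lborel) =
      (\<Sum>i<n. \<integral>\<^sup>+\<theta>. ennreal (indicator I \<theta> * \<bar>log_deriv_gap i \<theta>\<bar>) \<partial>lborel)"
    by (subst nn_integral_sum[symmetric])
       (auto intro!: nn_integral_cong simp: indicator_def sum_nonneg)
  also have "\<dots> = (\<Sum>i<n. \<Sum>k\<in>K. \<integral>\<^sup>+t\<in>{0..<1}. h i k t \<partial>lborel)"
    unfolding h_def using K \<open>finite K\<close>
    by (intro sum.cong refl nn_integral_eq_sum_unit_translates) (auto simp: indicator_def)
  also have "\<dots> = (\<integral>\<^sup>+t\<in>{0..<1}. (\<Sum>i<n. \<Sum>k\<in>K. h i k t) \<partial>lborel)"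
  proof -
    have [measurable]: "(\<lambda>t. h i k t) \<in> borel_measurable borel" for i k
      unfolding h_def by measurable
    have "(\<integral>\<^sup>+t\<in>{0..<1}. (\<Sum>i<n. \<Sum>k\<in>K. h i k t) \<partial>lborel) =
        (\<integral>\<^sup>+t. (\<Sum>i<n. \<Sum>k\<in>K. h i k t * indicator {0..<1} t) \<partial>lborel)"
      by (simp add: sum_distrib_right)
    also have "\<dots> = (\<Sum>i<n. \<Sum>k\<in>K. \<integral>\<^sup>+t\<in>{0..<1}. h i k t \<partial>lborel)"
      by (subst nn_integral_sum, measurable, intro sum.cong refl nn_integral_sum, measurable)
    finally show ?thesis ..
  qed
  also have "\<dots> \<le> (\<integral>\<^sup>+t\<in>{0..<1}. fibre_var F t \<partial>lborel)"
    using fibre_variation_bound[OF _ \<open>finite K\<close>]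
    by (intro nn_integral_mono) (auto simp: h_def indicator_def sum_nonneg)
  finally show ?thesis
    unfolding total_var_def .
qed

lemma set_integrable_on_I:
  fixes f :: "real \<Rightarrow> real"
  assumes "f \<in> borel_measurable borel" "\<And>\<theta>. \<bar>f \<theta>\<bar> \<le> C"
  shows "set_integrable lborel I f"
  using emeasure_bounded_finite[OF bounded] assms
  by (intro set_integrable_bounded[where B = C]) auto

lemma sum_log_deriv_gap_bounded: "\<exists>C. \<forall>\<theta>. \<bar>\<Sum>i<n. log_deriv_gap i \<theta>\<bar> \<le> C"
proof -
  obtain M where "\<And>i \<theta>. \<bar>log_deriv_gap i \<theta>\<bar> \<le> M"
    using log_deriv_gap_bounded by blast
  then have "\<bar>\<Sum>i<n. log_deriv_gap i \<theta>\<bar> \<le> real n * M" for \<theta>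
    using order_trans[OF sum_abs sum_bounded_above[of "{..<n}" "\<lambda>i. \<bar>log_deriv_gap i \<theta>\<bar>" M]]
    by simp
  then show ?thesis by blast
qed

lemma set_integral_sum_log_deriv_gap_ge:
  assumes "total_var F < \<infinity>"
  shows "- enn2real (total_var F) \<le> (LINT \<theta>:I|lborel. (\<Sum>i<n. log_deriv_gap i \<theta>))"
proof -
  define R where "R \<theta> = (\<Sum>i<n. log_deriv_gap i \<theta>)" for \<theta>
  define G where "G \<theta> = (\<Sum>i<n. \<bar>log_deriv_gap i \<theta>\<bar>)" for \<theta>
  obtain M where M: "\<And>i \<theta>. \<bar>log_deriv_gap i \<theta>\<bar> \<le> M"
    using log_deriv_gap_bounded by blast
  have G_nonneg: "0 \<le> G \<theta>" for \<theta>
    by (simp add: G_def sum_nonneg)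
  have "G \<theta> \<le> real n * M" for \<theta>
    using sum_bounded_above[of "{..<n}" "\<lambda>i. \<bar>log_deriv_gap i \<theta>\<bar>" M] M by (simp add: G_def)
  then have int_G: "set_integrable lborel I G"
    using G_nonneg unfolding G_def by (intro set_integrable_on_I[where C = "real n * M"]) auto
  obtain C where "\<And>\<theta>. \<bar>R \<theta>\<bar> \<le> C"
    using sum_log_deriv_gap_bounded unfolding R_def by blast
  then have int_R: "set_integrable lborel I R"
    unfolding R_def by (intro set_integrable_on_I[where C = C]) auto
  have "\<bar>R \<theta>\<bar> \<le> G \<theta>" for \<theta>
    unfolding R_def G_def by (rule sum_abs)
  then have "(LINT \<theta>:I|lborel. (- 1) * R \<theta>) \<le> (LINT \<theta>:I|lborel. G \<theta>)"
    using set_integrable_mult_right[OF int_R, of "- 1"] int_G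
    by (intro set_integral_mono) (auto simp: abs_le_iff)
  also have "\<dots> \<le> enn2real (total_var F)"
    using nn_integral_log_deriv_gap_le assms
    by (intro set_integral_le_enn2real[OF int_G G_nonneg]) (auto simp: G_def)
  finally show ?thesis
    unfolding set_integral_mult_right R_def by linarith
qed

theorem set_integral_deriv_ratio_powr_ge:
  assumes "s > 0" "total_var F < \<infinity>"
  shows "(LINT \<theta>:I|lborel.
            (deriv (Fiter \<omega> F n \<theta>) (\<psi> \<theta>) / deriv (Fiter \<omega> F n \<theta>) (\<phi> \<theta>)) powr s)
         \<ge> measure lborel I * exp (- s * enn2real (total_var F) / measure lborel I)"
proof -
  define R where "R \<theta> = (\<Sum>i<n. log_deriv_gap i \<theta>)" for \<theta>
  define V where "V = enn2real (total_var F)"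
  define m where "m = measure lborel I"
  obtain C where C: "\<And>\<theta>. \<bar>R \<theta>\<bar> \<le> C"
    using sum_log_deriv_gap_bounded unfolding R_def by blast
  have int_R: "set_integrable lborel I R"
    using C unfolding R_def by (intro set_integrable_on_I[where C = C]) auto
  have int_exp: "set_integrable lborel I (\<lambda>\<theta>. exp (s * R \<theta>))"
    using C \<open>s > 0\<close> unfolding R_def
    by (intro set_integrable_on_I[where C = "exp (s * C)"]) (auto simp: abs_le_iff)
  have "m * exp (- s * V / m) \<le> (LINT \<theta>:I|lborel. exp (s * R \<theta>))"
  proof (cases "m = 0")
    case True
    have "0 \<le> (LINT \<theta>:I|lborel. exp (s * R \<theta>))"
      unfolding set_lebesgue_integral_def by (rule integral_nonneg_AE) auto
    then show ?thesis using True by simp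
  next
    case False
    then have "m > 0" by (simp add: m_def order_less_le)
    have "s * (- V) \<le> s * (LINT \<theta>:I|lborel. R \<theta>)"
      using set_integral_sum_log_deriv_gap_ge[OF assms(2)] \<open>s > 0\<close>
      unfolding R_def V_def by (intro mult_left_mono) auto
    then have "- s * V / m \<le> (LINT \<theta>:I|lborel. s * R \<theta>) / m"
      using divide_right_mono[of "s * (- V)" _ m] \<open>m > 0\<close> by simp
    then have "m * exp (- s * V / m) \<le> m * exp ((LINT \<theta>:I|lborel. s * R \<theta>) / m)"
      using \<open>m > 0\<close> by simp
    also have "\<dots> \<le> (LINT \<theta>:I|lborel. exp (s * R \<theta>))"
      using int_R int_exp \<open>m > 0\<close> unfolding m_def by (intro measure_mul_exp_mean_le) auto
    finally show ?thesis .
  qed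
  then show ?thesis
    by (simp add: deriv_ratio_powr_eq R_def V_def m_def)
qed

end

theorem mainTheorem6:
  fixes \<omega> :: real and F :: "real \<Rightarrow> real \<Rightarrow> real" and I :: "real set"
    and n :: nat and \<phi> \<psi> :: "real \<Rightarrow> real" and s :: real
  assumes "0 \<le> \<omega>" "\<omega> < 1" "\<omega> \<notin> \<rat>"
    and "qpf_C1 F" and "total_var F < \<infinity>"
    and "is_interval I" and "bounded I" and "inj_on frac I"
    and "set_borel_measurable lborel I \<phi>" and "set_borel_measurable lborel I \<psi>"
    and "\<forall>i<n. \<forall>j<n. i \<noteq> j \<longrightarrow>
           (Tmap \<omega> F ^^ i) ` band I \<phi> \<psi> \<inter> (Tmap \<omega> F ^^ j) ` band I \<phi> \<psi> = {}"
    and "s > 0"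
  shows "(LINT \<theta>:I|lborel.
            (deriv (Fiter \<omega> F n \<theta>) (\<psi> \<theta>) / deriv (Fiter \<omega> F n \<theta>) (\<phi> \<theta>)) powr s)
         \<ge> measure lborel I * exp (- s * enn2real (total_var F) / measure lborel I)"
proof -
  \<comment> \<open>Only the values of \<open>\<phi>\<close> and \<open>\<psi>\<close> on \<open>I\<close> matter, so they may be replaced by Borel
    functions on all of \<open>\<real>\<close>.\<close>
  define \<phi>' where "\<phi>' \<theta> = indicator I \<theta> *\<^sub>R \<phi> \<theta>" for \<theta>
  define \<psi>' where "\<psi>' \<theta> = indicator I \<theta> *\<^sub>R \<psi> \<theta>" for \<theta>
  have on_I: "\<phi>' \<theta> = \<phi> \<theta>" "\<psi>' \<theta> = \<psi> \<theta>" if "\<theta> \<in> I" for \<theta>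
    using that by (simp_all add: \<phi>'_def \<psi>'_def)
  then have "band I \<phi>' \<psi>' = band I \<phi> \<psi>"
    unfolding band_def by force
  then interpret measurable_band \<omega> F I n \<phi>' \<psi>'
    using assms unfolding set_borel_measurable_def \<phi>'_def \<psi>'_def by unfold_locales auto
  have "(LINT \<theta>:I|lborel.
            (deriv (Fiter \<omega> F n \<theta>) (\<psi>' \<theta>) / deriv (Fiter \<omega> F n \<theta>) (\<phi>' \<theta>)) powr s) =
        (LINT \<theta>:I|lborel.
            (deriv (Fiter \<omega> F n \<theta>) (\<psi> \<theta>) / deriv (Fiter \<omega> F n \<theta>) (\<phi> \<theta>)) powr s)"
    using on_I by (intro set_lebesgue_integral_cong) auto
  then show ?thesis
    using set_integral_deriv_ratio_powr_ge[OF \<open>s > 0\<close> \<open>total_var F < \<infinity>\<close>] by simp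
qed

end
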